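(* Let $p_1,p_2,q$ be non-negative integers, $k$ an integer and $x_1,x_2\in\mathbb{C}$. Then $$\sum_{l=0}^{q}(-1)^{l}B^{(k)}_{p_1+l,p_2}(x_1,x_2)\,\frac{1}{l!}\frac{d^{l}}{dx_1^{l}}\prod_{i=0}^{q-1}(x_1+i)=\sum_{l=0}^{q}(-1)^{l}B^{(k)}_{p_1,p_2+l}(x_1,x_2)\,\frac{1}{l!}\frac{d^{l}}{dx_2^{l}}\prod_{i=0}^{q-1}(x_2+i)=\sum_{l=0}^{p_1+p_2}S_{1,x_1+q}^{1,x_2+q,p_2}(p_1,l)\frac{(-1)^{l}(l+q)!}{(l+q+1)^{k}}.$$ (Empty products equal $1$.)
   Context: For non-negative integers $p_1,p_2,l$ and $x_1,x_2\in\mathbb{C}$, the generalized Stirling numbers are $$S_{1,x_1}^{1,x_2,p_2}(p_1,l)=\frac{1}{l!}\sum_{j=0}^{l}(-1)^{j}\binom{l}{j}(l-j+x_1)^{p_1}(l-j+x_2)^{p_2}.$$ For an integer $k$, the bi-variate poly-Bernoulli polynomial is $$B^{(k)}_{p_1,p_2}(x_1,x_2)=\sum_{l=0}^{p_1+p_2}S_{1,x_1}^{1,x_2,p_2}(p_1,l)\frac{(-1)^{l}\,l!}{(l+1)^{k}}.$$ *)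

theory Defs
  imports "HOL-Analysis.Analysis"
begin

definition gen_stirling :: "complex \<Rightarrow> complex \<Rightarrow> nat \<Rightarrow> nat \<Rightarrow> nat \<Rightarrow> complex" where
  "gen_stirling x1 x2 p2 p1 l =
     (1 / of_nat (fact l)) *
     (\<Sum>j=0..l. (-1) ^ j * of_nat (l choose j) *
        (of_nat (l - j) + x1) ^ p1 * (of_nat (l - j) + x2) ^ p2)"

definition bipoly_bernoulli :: "int \<Rightarrow> nat \<Rightarrow> nat \<Rightarrow> complex \<Rightarrow> complex \<Rightarrow> complex" where
  "bipoly_bernoulli k p1 p2 x1 x2 =
     (\<Sum>l=0..p1+p2. gen_stirling x1 x2 p2 p1 l *
        ((-1) ^ l * of_nat (fact l) / (of_nat (l + 1)) powi k))"

end

(*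
  Write g(r) = (r + x1)^p1 (r + x2)^p2 and T_m(g) = sum_r (-1)^r C(m,r) g(r). The Stirling
  number S(p1,m) is (-1)^m T_m(g) / m!, and T_m annihilates polynomials of degree < m, so
  B_{p1,p2} = sum_{m <= D} T_m(g) / (m+1)^k for every D >= p1 + p2. In the alternating sum of
  the theorem, linearity of T_m moves the sum over l inside, where it becomes the Taylor
  expansion of the rising factorial (x)_q around x1, evaluated at x1 - (r + x1) = -r. The
  weight (-r)_q vanishes for r < q and equals (-1)^q r!/(r-q)! otherwise, so shifting m and r
  by q leaves (m+q)!/m! times T_m of g(. + q), i.e. the Stirling number at (x1 + q, x2 + q).
  The resulting expression is symmetric under (x1, p1) <-> (x2, p2), which gives the first
  equality.
*)

theory Submission
  imports Defs "HOL-Complex_Analysis.Cauchy_Integral_Formula"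
begin

text \<open>Up to the sign \<open>(-1)^m\<close>, this is the \<open>m\<close>-th forward difference of \<open>g\<close> at \<open>0\<close>.\<close>
definition binomial_transform :: "(nat \<Rightarrow> 'a::comm_ring_1) \<Rightarrow> nat \<Rightarrow> 'a" where
  "binomial_transform g m = (\<Sum>r\<le>m. (-1) ^ r * of_nat (m choose r) * g r)"

lemma binomial_transform_Suc:
  "binomial_transform g (Suc m) = binomial_transform (\<lambda>r. g r - g (Suc r)) m"
proof -
  have "binomial_transform g (Suc m)
      = g 0 + (\<Sum>r\<le>m. (-1) ^ Suc r * of_nat ((m choose r) + (m choose Suc r)) * g (Suc r))"
    unfolding binomial_transform_def by (subst sum.atMost_Suc_shift) simp
  also have "\<dots> = (\<Sum>r\<le>m. (-1) ^ Suc r * of_nat (m choose r) * g (Suc r))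
      + (g 0 + (\<Sum>r\<le>m. (-1) ^ Suc r * of_nat (m choose Suc r) * g (Suc r)))"
    by (simp add: ring_distribs sum.distrib[symmetric])
  also have "g 0 + (\<Sum>r\<le>m. (-1) ^ Suc r * of_nat (m choose Suc r) * g (Suc r))
      = (\<Sum>r\<le>Suc m. (-1) ^ r * of_nat (m choose r) * g r)"
    by (subst sum.atMost_Suc_shift) simp
  also have "\<dots> = (\<Sum>r\<le>m. (-1) ^ r * of_nat (m choose r) * g r)"
    by (simp add: binomial_eq_0)
  also have "(\<Sum>r\<le>m. (-1) ^ Suc r * of_nat (m choose r) * g (Suc r))
      + (\<Sum>r\<le>m. (-1) ^ r * of_nat (m choose r) * g r)
      = binomial_transform (\<lambda>r. g r - g (Suc r)) m"
    unfolding binomial_transform_def sum.distrib[symmetric]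
    by (intro sum.cong) (simp_all add: algebra_simps)
  finally show ?thesis .
qed

lemma degree_diff_pcompose_shift_less:
  fixes p :: "'a::idom poly"
  assumes "degree p > 0"
  shows "degree (p - p \<circ>\<^sub>p [:1, 1:]) < degree p"
proof -
  have same_degree: "degree (p \<circ>\<^sub>p [:1, 1:]) = degree p"
    by (simp add: degree_pcompose)
  have "lead_coeff (p \<circ>\<^sub>p [:1, 1:]) = lead_coeff p"
    by (simp add: lead_coeff_comp)
  then have top_coeff: "coeff (p - p \<circ>\<^sub>p [:1, 1:]) (degree p) = 0"
    using same_degree by simp
  have "degree (p - p \<circ>\<^sub>p [:1, 1:]) \<le> degree p"
    using degree_diff_le[of p "degree p" "p \<circ>\<^sub>p [:1, 1:]"] same_degree by simp
  moreover have "degree (p - p \<circ>\<^sub>p [:1, 1:]) \<noteq> degree p"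
    using top_coeff assms by (metis leading_coeff_0_iff degree_0 less_irrefl)
  ultimately show ?thesis by simp
qed

lemma binomial_transform_poly_eq_0:
  fixes p :: "'a::{idom,ring_char_0} poly"
  assumes "degree p < m"
  shows "binomial_transform (\<lambda>r. poly p (of_nat r)) m = 0"
  using assms
proof (induction m arbitrary: p)
  case 0
  then show ?case by simp
next
  case (Suc m)
  have "binomial_transform (\<lambda>r. poly p (of_nat r)) (Suc m)
      = binomial_transform (\<lambda>r. poly (p - p \<circ>\<^sub>p [:1, 1:]) (of_nat r)) m"
    by (simp add: binomial_transform_Suc poly_pcompose algebra_simps)
  also have "\<dots> = 0"
  proof (cases "degree p = 0")
    case True
    then obtain c where "p = [:c:]" by (metis degree_eq_zeroE)
    then show ?thesis by (simp add: binomial_transform_def)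
  next
    case False
    then show ?thesis
      using degree_diff_pcompose_shift_less[of p] Suc by (intro Suc.IH) auto
  qed
  finally show ?case .
qed

lemma sum_atMost_add_shift:
  fixes F :: "nat \<Rightarrow> 'a::comm_monoid_add"
  assumes "\<And>m. m < q \<Longrightarrow> F m = 0"
  shows "(\<Sum>m\<le>n + q. F m) = (\<Sum>m\<le>n. F (m + q))"
proof -
  have "{..n + q} = {..<q} \<union> {0 + q..n + q}" by auto
  then have "(\<Sum>m\<le>n + q. F m) = (\<Sum>m<q. F m) + (\<Sum>m = 0 + q..n + q. F m)"
    by (simp add: sum.union_disjoint ivl_disj_int)
  also have "\<dots> = (\<Sum>m\<le>n. F (m + q))"
    using assms by (simp only: sum.shift_bounds_cl_nat_ivl atLeast0AtMost) simp
  finally show ?thesis .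
qed

lemma pochhammer_minus_of_nat_add:
  "pochhammer (- of_nat (s + q)) q = ((-1) ^ q * fact (s + q) / fact s :: 'a::field_char_0)"
proof -
  have "pochhammer (1::'a) (s + q) = pochhammer 1 s * pochhammer (1 + of_nat s) q"
    by (rule pochhammer_product')
  then have "fact (s + q) = (fact s * pochhammer (of_nat s + 1) q :: 'a)"
    by (simp add: pochhammer_fact add.commute)
  then show ?thesis
    using pochhammer_minus [of "of_nat (s + q) :: 'a" q] by simp
qed

lemma binomial_transform_mult_pochhammer:
  fixes g :: "nat \<Rightarrow> 'a::field_char_0"
  shows "binomial_transform (\<lambda>r. g r * pochhammer (- of_nat r) q) (n + q)
       = fact (n + q) / fact n * binomial_transform (\<lambda>s. g (s + q)) n"
proof -
  have "binomial_transform (\<lambda>r. g r * pochhammer (- of_nat r) q) (n + q)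
      = (\<Sum>s\<le>n. (-1) ^ (s + q) * of_nat ((n + q) choose (s + q))
                  * (g (s + q) * pochhammer (- of_nat (s + q)) q))"
    unfolding binomial_transform_def
    by (rule sum_atMost_add_shift) (simp add: pochhammer_of_nat_eq_0_lemma)
  also have "\<dots> = (\<Sum>s\<le>n. fact (n + q) / fact n * ((-1) ^ s * of_nat (n choose s) * g (s + q)))"
  proof (rule sum.cong [OF refl])
    fix s assume "s \<in> {..n}"
    then have "s \<le> n" by simp
    then have binomial_ratio: "of_nat ((n + q) choose (s + q)) * (fact (s + q) / fact s)
             = (fact (n + q) / fact n * of_nat (n choose s) :: 'a)"
      by (simp add: binomial_fact field_simps)
    have sign: "(-1) ^ (s + q) * (-1) ^ q = ((-1) ^ s :: 'a)"
      by (simp add: power_add mult.assoc flip: power_mult_distrib)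
    have "(-1) ^ (s + q) * of_nat ((n + q) choose (s + q))
                  * (g (s + q) * pochhammer (- of_nat (s + q)) q)
        = ((-1) ^ (s + q) * (-1) ^ q) * g (s + q)
          * (of_nat ((n + q) choose (s + q)) * (fact (s + q) / fact s))"
      unfolding pochhammer_minus_of_nat_add by (simp add: mult_ac)
    then show "(-1) ^ (s + q) * of_nat ((n + q) choose (s + q))
                  * (g (s + q) * pochhammer (- of_nat (s + q)) q)
        = fact (n + q) / fact n * ((-1) ^ s * of_nat (n choose s) * g (s + q))"
      unfolding sign binomial_ratio by (simp add: mult_ac)
  qed
  finally show ?thesis
    by (simp add: binomial_transform_def sum_distrib_left)
qed

lemma binomial_transform_cmult:
  "binomial_transform (\<lambda>r. c * g r) m = c * binomial_transform g m"
  by (simp add: binomial_transform_def sum_distrib_left mult_ac)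

lemma binomial_transform_sum:
  "binomial_transform (\<lambda>r. \<Sum>l\<in>L. g l r) m = (\<Sum>l\<in>L. binomial_transform (g l) m)"
  by (simp add: binomial_transform_def sum_distrib_left sum.swap [of _ L])

lemma binomial_transform_mult_pochhammer_eq_0:
  fixes g :: "nat \<Rightarrow> 'a::idom"
  assumes "m < q"
  shows "binomial_transform (\<lambda>r. g r * pochhammer (- of_nat r) q) m = 0"
  using assms by (simp add: binomial_transform_def pochhammer_of_nat_eq_0_lemma)

lemma gen_stirling_eq_binomial_transform:
  "gen_stirling x1 x2 p2 p1 m = (-1) ^ m / fact m
     * binomial_transform (\<lambda>r. (of_nat r + x1) ^ p1 * (of_nat r + x2) ^ p2) m"
proof -
  have "(\<Sum>j=0..m. (-1) ^ j * of_nat (m choose j) *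
          (of_nat (m - j) + x1) ^ p1 * (of_nat (m - j) + x2) ^ p2)
      = (\<Sum>r=0..m. (-1) ^ (m - r) * of_nat (m choose r) *
          ((of_nat r + x1) ^ p1 * (of_nat r + x2) ^ p2))"
    by (subst sum.atLeastAtMost_rev)
       (auto intro!: sum.cong simp: binomial_symmetric [symmetric] mult.assoc)
  also have "\<dots> = (-1) ^ m * binomial_transform (\<lambda>r. (of_nat r + x1) ^ p1 * (of_nat r + x2) ^ p2) m"
    unfolding binomial_transform_def sum_distrib_left atLeast0AtMost
    by (intro sum.cong refl)
       (simp add: neg_one_power_add_eq_neg_one_power_diff [symmetric] power_add mult.assoc)
  finally show ?thesis
    by (simp add: gen_stirling_def)
qed

lemma bipoly_bernoulli_eq_sum_binomial_transform:
  assumes "a + b \<le> D"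
  shows "bipoly_bernoulli k a b x1 x2
       = (\<Sum>m\<le>D. binomial_transform (\<lambda>r. (of_nat r + x1) ^ a * (of_nat r + x2) ^ b) m
                   / of_nat (m + 1) powi k)"
proof -
  let ?f = "\<lambda>r. (of_nat r + x1) ^ a * (of_nat r + x2) ^ b"
  have "bipoly_bernoulli k a b x1 x2 = (\<Sum>m\<le>a + b. binomial_transform ?f m / of_nat (m + 1) powi k)"
    unfolding bipoly_bernoulli_def atLeast0AtMost gen_stirling_eq_binomial_transform
    by (intro sum.cong refl) simp
  also have "\<dots> = (\<Sum>m\<le>D. binomial_transform ?f m / of_nat (m + 1) powi k)"
  proof (intro sum.mono_neutral_left ballI)
    fix m assume "m \<in> {..D} - {..a + b}"
    then have "degree ([:x1, 1:] ^ a * [:x2, 1:] ^ b) < m"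
      using degree_mult_le [of "[:x1, 1:] ^ a" "[:x2, 1:] ^ b"]
            degree_power_le [of "[:x1, 1:]" a] degree_power_le [of "[:x2, 1:]" b]
      by auto
    then have "binomial_transform (\<lambda>r. poly ([:x1, 1:] ^ a * [:x2, 1:] ^ b) (of_nat r)) m = 0"
      by (rule binomial_transform_poly_eq_0)
    then show "binomial_transform ?f m / of_nat (m + 1) powi k = 0"
      by (simp add: poly_power add.commute)
  qed (use assms in auto)
  finally show ?thesis .
qed

lemma higher_deriv_poly: "(deriv ^^ l) (poly p) = poly ((pderiv ^^ l) p)"
proof (induction l)
  case (Suc l)
  show ?case by (simp add: Suc.IH fun_eq_iff DERIV_imp_deriv)
qed simp

lemma higher_pderiv_eq_0:
  assumes "degree p < l"
  shows "(pderiv ^^ l) p = 0"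
  using assms by (simp add: poly_eq_iff coeff_higher_pderiv coeff_eq_0)

lemma taylor_expansion_poly:
  fixes p :: "complex poly"
  assumes "degree p \<le> n"
  shows "(\<Sum>l\<le>n. (deriv ^^ l) (poly p) x / fact l * h ^ l) = poly p (x + h)"
proof -
  have "(\<lambda>l. (deriv ^^ l) (poly p) x / fact l * (x + h - x) ^ l) sums poly p (x + h)"
    by (rule holomorphic_power_series [where r = "norm h + 1"])
       (auto simp: dist_norm intro: holomorphic_intros)
  moreover have "(\<lambda>l. (deriv ^^ l) (poly p) x / fact l * (x + h - x) ^ l) sums
      (\<Sum>l\<le>n. (deriv ^^ l) (poly p) x / fact l * (x + h - x) ^ l)"
    using assms by (intro sums_finite) (auto simp: higher_deriv_poly higher_pderiv_eq_0)
  ultimately show ?thesis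
    using sums_unique2 by fastforce
qed

lemma taylor_expansion_pochhammer:
  fixes x h :: complex
  shows "(\<Sum>l\<le>q. (deriv ^^ l) (\<lambda>z. pochhammer z q) x / fact l * h ^ l) = pochhammer (x + h) q"
proof -
  define P where "P = (\<Prod>i<q. [:of_nat i, 1:] :: complex poly)"
  have "(\<lambda>z. pochhammer z q) = poly P"
    by (simp add: P_def pochhammer_prod poly_prod fun_eq_iff atLeast0LessThan add.commute)
  moreover have "degree P \<le> q"
    using degree_prod_sum_le [of "{..<q}" "\<lambda>i. [:of_nat i, 1:] :: complex poly"]
    by (simp add: P_def)
  ultimately show ?thesis
    using taylor_expansion_poly [of P q x h] by (simp add: fun_eq_iff)
qed

lemma alternating_taylor_pochhammer:
  fixes x :: complex
  shows "(\<Sum>l\<le>q. (-1) ^ l * ((1 / of_nat (fact l)) * (deriv ^^ l) (\<lambda>z. pochhammer z q) x)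
            * (of_nat r + x) ^ l) = pochhammer (- of_nat r) q"
proof -
  have "(\<Sum>l\<le>q. (-1) ^ l * ((1 / of_nat (fact l)) * (deriv ^^ l) (\<lambda>z. pochhammer z q) x)
            * (of_nat r + x) ^ l)
      = (\<Sum>l\<le>q. (deriv ^^ l) (\<lambda>z. pochhammer z q) x / fact l * (- (of_nat r + x)) ^ l)"
    unfolding power_minus [of "of_nat r + x"] by (intro sum.cong refl) simp
  also have "\<dots> = pochhammer (- of_nat r) q"
    using taylor_expansion_pochhammer [of q x "- (of_nat r + x)"] by simp
  finally show ?thesis .
qed

lemma alternating_sum_bipoly_bernoulli:
  fixes x1 x2 :: complex
  shows "(\<Sum>l=0..q. (-1) ^ l * bipoly_bernoulli k (p1 + l) p2 x1 x2 *
            ((1 / of_nat (fact l)) * (deriv ^^ l) (\<lambda>x. pochhammer x q) x1))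
       = (\<Sum>m\<le>p1 + p2 + q. binomial_transform
            (\<lambda>r. (of_nat r + x1) ^ p1 * (of_nat r + x2) ^ p2 * pochhammer (- of_nat r) q) m
            / of_nat (m + 1) powi k)"
proof -
  define c where "c l = (1 / of_nat (fact l)) * (deriv ^^ l) (\<lambda>x. pochhammer x q) x1" for l
  define f where "f a r = (of_nat r + x1) ^ a * (of_nat r + x2) ^ p2" for a r
  define W where "W m = (of_nat (m + 1) :: complex) powi k" for m
  have taylor: "(\<Sum>l\<le>q. (-1) ^ l * c l * f (p1 + l) r) = f p1 r * pochhammer (- of_nat r) q" for r
  proof -
    have "(\<Sum>l\<le>q. (-1) ^ l * c l * f (p1 + l) r)
        = f p1 r * (\<Sum>l\<le>q. (-1) ^ l * c l * (of_nat r + x1) ^ l)"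
      unfolding sum_distrib_left by (intro sum.cong refl) (simp add: f_def power_add mult_ac)
    then show ?thesis
      unfolding c_def alternating_taylor_pochhammer .
  qed
  have "(\<Sum>l=0..q. (-1) ^ l * bipoly_bernoulli k (p1 + l) p2 x1 x2 * c l)
      = (\<Sum>l\<le>q. \<Sum>m\<le>p1 + p2 + q. (-1) ^ l * c l * binomial_transform (f (p1 + l)) m / W m)"
    unfolding atLeast0AtMost
  proof (intro sum.cong refl)
    fix l assume "l \<in> {..q}"
    then have "bipoly_bernoulli k (p1 + l) p2 x1 x2
        = (\<Sum>m\<le>p1 + p2 + q. binomial_transform (f (p1 + l)) m / W m)"
      unfolding f_def W_def by (intro bipoly_bernoulli_eq_sum_binomial_transform) simp
    then show "(-1) ^ l * bipoly_bernoulli k (p1 + l) p2 x1 x2 * c l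
        = (\<Sum>m\<le>p1 + p2 + q. (-1) ^ l * c l * binomial_transform (f (p1 + l)) m / W m)"
      by (simp add: sum_distrib_left sum_distrib_right mult_ac)
  qed
  also have "\<dots> = (\<Sum>m\<le>p1 + p2 + q. \<Sum>l\<le>q. (-1) ^ l * c l * binomial_transform (f (p1 + l)) m / W m)"
    by (rule sum.swap)
  also have "\<dots> = (\<Sum>m\<le>p1 + p2 + q.
      binomial_transform (\<lambda>r. \<Sum>l\<le>q. (-1) ^ l * c l * f (p1 + l) r) m / W m)"
    by (simp add: binomial_transform_sum binomial_transform_cmult mult.assoc sum_divide_distrib)
  also have "\<dots> = (\<Sum>m\<le>p1 + p2 + q.
      binomial_transform (\<lambda>r. f p1 r * pochhammer (- of_nat r) q) m / W m)"
    by (simp only: taylor)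
  finally show ?thesis
    by (simp add: c_def f_def W_def)
qed

lemma sum_binomial_transform_pochhammer_eq_gen_stirling:
  fixes x1 x2 :: complex
  shows "(\<Sum>m\<le>p1 + p2 + q. binomial_transform
            (\<lambda>r. (of_nat r + x1) ^ p1 * (of_nat r + x2) ^ p2 * pochhammer (- of_nat r) q) m
            / of_nat (m + 1) powi k)
       = (\<Sum>l=0..p1 + p2. gen_stirling (x1 + of_nat q) (x2 + of_nat q) p2 p1 l *
            ((-1) ^ l * of_nat (fact (l + q)) / (of_nat (l + q + 1)) powi k))"
proof -
  define f where "f r = (of_nat r + x1) ^ p1 * (of_nat r + x2) ^ p2" for r
  have "(\<Sum>m\<le>p1 + p2 + q. binomial_transform (\<lambda>r. f r * pochhammer (- of_nat r) q) m
          / of_nat (m + 1) powi k)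
      = (\<Sum>n\<le>p1 + p2. binomial_transform (\<lambda>r. f r * pochhammer (- of_nat r) q) (n + q)
          / of_nat (n + q + 1) powi k)"
    by (rule sum_atMost_add_shift) (simp add: binomial_transform_mult_pochhammer_eq_0)
  also have "\<dots> = (\<Sum>n=0..p1 + p2. gen_stirling (x1 + of_nat q) (x2 + of_nat q) p2 p1 n *
            ((-1) ^ n * of_nat (fact (n + q)) / (of_nat (n + q + 1)) powi k))"
    unfolding atLeast0AtMost
  proof (intro sum.cong refl)
    fix n
    have "binomial_transform (\<lambda>s. f (s + q)) n
        = (-1) ^ n * fact n * gen_stirling (x1 + of_nat q) (x2 + of_nat q) p2 p1 n"
      by (simp add: gen_stirling_eq_binomial_transform f_def add_ac flip: power_mult_distrib)
    then show "binomial_transform (\<lambda>r. f r * pochhammer (- of_nat r) q) (n + q)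
          / of_nat (n + q + 1) powi k
        = gen_stirling (x1 + of_nat q) (x2 + of_nat q) p2 p1 n *
            ((-1) ^ n * of_nat (fact (n + q)) / (of_nat (n + q + 1)) powi k)"
      by (simp add: binomial_transform_mult_pochhammer)
  qed
  finally show ?thesis
    by (simp add: f_def)
qed

lemma bipoly_bernoulli_swap:
  "bipoly_bernoulli k a b x1 x2 = bipoly_bernoulli k b a x2 x1"
  unfolding bipoly_bernoulli_def gen_stirling_def by (simp add: add.commute mult_ac)

theorem proposition4p1:
  fixes p1 p2 q :: nat and k :: int and x1 x2 :: complex
  shows "(\<Sum>l=0..q. (-1) ^ l * bipoly_bernoulli k (p1 + l) p2 x1 x2 *
            ((1 / of_nat (fact l)) * (deriv ^^ l) (\<lambda>x. \<Prod>i=0..<q. x + of_nat i) x1))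
       = (\<Sum>l=0..q. (-1) ^ l * bipoly_bernoulli k p1 (p2 + l) x1 x2 *
            ((1 / of_nat (fact l)) * (deriv ^^ l) (\<lambda>x. \<Prod>i=0..<q. x + of_nat i) x2))
   \<and> (\<Sum>l=0..q. (-1) ^ l * bipoly_bernoulli k (p1 + l) p2 x1 x2 *
            ((1 / of_nat (fact l)) * (deriv ^^ l) (\<lambda>x. \<Prod>i=0..<q. x + of_nat i) x1))
       = (\<Sum>l=0..p1+p2. gen_stirling (x1 + of_nat q) (x2 + of_nat q) p2 p1 l *
            ((-1) ^ l * of_nat (fact (l + q)) / (of_nat (l + q + 1)) powi k))"
  unfolding pochhammer_prod [symmetric] bipoly_bernoulli_swap [of k p1] alternating_sum_bipoly_bernoulli
  by (intro conjI sum_binomial_transform_pochhammer_eq_gen_stirling) (simp add: add.commute mult.commute)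

end
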